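(* Let $W\subset S$ be a one-dimensional $\mathbb{F}_q$-subspace and $\lambda,\mu$ partitions. Then $$T_{\lambda/\mu}(W)=\begin{cases}(-1)^{|\lambda|-|\mu|}\prod_{s\in\lambda/\mu}\varphi^{c(s)}E_1(W)&\text{if }\mu\subseteq\lambda\text{ and }\lambda/\mu\text{ is a vertical strip},\\ 0&\text{otherwise,}\end{cases}$$ where for a box $s=(i,j)$ (row $i$, column $j$) the content is $c(s)=j-i$.
   Context: Let $q$ be a power of a prime $p$, $S=\mathbb{F}_q[x_1,\dots,x_n]$, $\widehat S=\bigcup_{r\ge0}\mathbb{F}_q[x_1^{q^{-r}},\dots,x_n^{q^{-r}}]$, $\varphi(u)=u^q$ the Frobenius automorphism of $\widehat S$. For a subspace $W\subset S$ of dimension $k$ with basis $w_1,\dots,w_k$ and strictly decreasing nonnegative integers $\alpha_1>\dots>\alpha_k$, $A_\alpha(W)=\det(w_i^{q^{\alpha_j}})_{i,j}$; for a partition $\lambda$ with at most $k$ nonzero parts, $S_\lambda(W)=A_{\lambda+\delta_k}(W)/A_{\delta_k}(W)$, $\delta_k=(k-1,\dots,0)$. $E_r(W)=S_{(1^r)}(W)$ for $0\le r\le k$, $E_r(W)=0$ otherwise (so for $\dim W=1$ with basis $w$, $E_1(W)=w^{q-1}$). For partitions $\lambda,\mu$ with $N=\max\{\ell(\lambda),\ell(\mu)\}$ ($\ell$ = number of nonzero parts), $T_{\lambda/\mu}(W)=\det\big((-1)^{\lambda_i-\mu_j-i+j}\varphi^{\lambda_i-i}E_{\lambda_i-\mu_j-i+j}(W)\big)_{1\le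 i,j\le N}$. $\mu\subseteq\lambda$ means $\mu_i\le\lambda_i$ for all $i$; the skew diagram $\lambda/\mu$ is the set of boxes $(i,j)$ with $\mu_i<j\le\lambda_i$; it is a vertical strip if no two of its boxes lie in the same row, i.e. $0\le\lambda_i-\mu_i\le1$ for all $i$. *)

theory Defs
  imports "HOL-Library.Poly_Mapping" "Jordan_Normal_Form.Determinant"
begin

text \<open>Ambient ring: finitely supported F_q-linear combinations of monomials
  x_0^e_0 ... with nonnegative rational exponents (variables indexed 0..n-1).
  The coefficient field F_q is a finite field type 'a, q = CARD('a).\<close>
type_synonym 'a hpoly = "(nat \<Rightarrow>\<^sub>0 rat) \<Rightarrow>\<^sub>0 'a"

text \<open>S = F_q[x_1,...,x_n]: only integer (natural) exponents.\<close>
definition polyS :: "nat \<Rightarrow> 'a::zero hpoly set" where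
  "polyS n = {f. \<forall>m\<in>Poly_Mapping.keys f. \<forall>i\<in>Poly_Mapping.keys m. i < n \<and> Poly_Mapping.lookup m i \<in> \<nat>}"

text \<open>S-hat = union over r of F_q[x_1^(q^-r),...,x_n^(q^-r)].\<close>
definition polyShat :: "nat \<Rightarrow> nat \<Rightarrow> 'a::zero hpoly set" where
  "polyShat q n = {f. \<forall>m\<in>Poly_Mapping.keys f. \<forall>i\<in>Poly_Mapping.keys m. i < n \<and> Poly_Mapping.lookup m i \<ge> 0 \<and>
      (\<exists>r::nat. Poly_Mapping.lookup m i * of_nat q ^ r \<in> \<int>)}"

text \<open>phi^a on S-hat, a an integer: phi(u) = u^q, negative powers are inverses.\<close>
definition frob :: "nat \<Rightarrow> nat \<Rightarrow> int \<Rightarrow> 'a::comm_ring_1 hpoly \<Rightarrow> 'a hpoly" where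
  "frob q n a u = (if a \<ge> 0 then u ^ (q ^ nat a)
     else (THE v. v \<in> polyShat q n \<and> v ^ (q ^ nat (- a)) = u))"

text \<open>E_r(W) for a one-dimensional W with basis w: E_0 = 1, E_1 = w^(q-1), else 0.\<close>
definition E1dim :: "nat \<Rightarrow> 'a::comm_ring_1 hpoly \<Rightarrow> int \<Rightarrow> 'a hpoly" where
  "E1dim q w r = (if r = 0 then 1 else if r = 1 then w ^ (q - 1) else 0)"

text \<open>Partitions: lists of positive parts, weakly decreasing; parts are 1-indexed.\<close>
definition is_partition :: "nat list \<Rightarrow> bool" where
  "is_partition la \<longleftrightarrow> (\<forall>i. Suc i < length la \<longrightarrow> la ! Suc i \<le> la ! i) \<and> (\<forall>x\<in>set la. 0 < x)"

definition part :: "nat list \<Rightarrow> nat \<Rightarrow> nat" where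
  "part la i = (if 1 \<le> i \<and> i \<le> length la then la ! (i - 1) else 0)"

definition size_part :: "nat list \<Rightarrow> nat" where
  "size_part la = sum_list la"

definition subpart :: "nat list \<Rightarrow> nat list \<Rightarrow> bool" where
  "subpart mu la \<longleftrightarrow> (\<forall>i. part mu i \<le> part la i)"

text \<open>Boxes (i,j) (row i, column j) of the skew diagram la/mu.\<close>
definition skew :: "nat list \<Rightarrow> nat list \<Rightarrow> (nat \<times> nat) set" where
  "skew la mu = {(i, j). 1 \<le> i \<and> part mu i < j \<and> j \<le> part la i}"

definition vertical_strip :: "nat list \<Rightarrow> nat list \<Rightarrow> bool" where
  "vertical_strip la mu \<longleftrightarrow>
     (\<forall>i j j'. (i, j) \<in> skew la mu \<longrightarrow> (i, j') \<in> skew la mu \<longrightarrow> j = j')"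

definition content :: "nat \<times> nat \<Rightarrow> int" where
  "content s = int (snd s) - int (fst s)"

definition Tskew :: "nat \<Rightarrow> nat \<Rightarrow> 'a::comm_ring_1 hpoly \<Rightarrow> nat list \<Rightarrow> nat list \<Rightarrow> 'a hpoly" where
  "Tskew q n w la mu = (let N = max (length la) (length mu) in
     det (mat N N (\<lambda>(i, j).
       let r = int (part la (Suc i)) - int (part mu (Suc j)) - int (Suc i) + int (Suc j)
       in (if even r then 1 else -1) *
          frob q n (int (part la (Suc i)) - int (Suc i)) (E1dim q w r))))"

end

theory Submission
  imports Defs
begin

(* For one-dimensional W only E_0 = 1 and E_1 survive, so the (i, j) entry of the matrix defining
   T_{la/mu}(W) vanishes unless r_ij = la_i - mu_j - i + j is 0 or 1. For rows i < k and columns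
   j < j' one has r_kj <= r_ij' - 2, so every permutation other than the identity meets a zero entry
   and T_{la/mu}(W) is the product of the diagonal entries, which are 1, -phi^(la_i - i) E_1(W) or 0
   according as la_i - mu_i is 0, 1 or anything else. The boxes of a vertical strip are exactly the
   row ends (i, la_i) with la_i = mu_i + 1; their content is la_i - i and there are |la| - |mu| of them.

   For negative a, phi^a u is defined as the unique (q^-a)-th root of u in S-hat, so phi^a 1 = 1
   needs that 1 is the only root of unity of order a power of q in S-hat: units of a monoid algebra
   over a totally ordered group are monomials, and c^(q^k) = c in F_q. *)

section \<open>Roots of unity in monoid algebras over finite fields\<close>

(* The library's finite_field_power_card_eq_same needs the class finite_field, which {field, finite}
   is not a subclass of. *)
lemma finite_field_power_card:
  fixes x :: "'a::{field,finite}"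
  shows "x ^ card (UNIV :: 'a set) = x"
proof (cases "x = 0")
  case True
  then show ?thesis by (simp add: finite_UNIV_card_ge_0)
next
  case False
  define U where "U = UNIV - {0::'a}"
  have "bij_betw ((*) x) U U"
    unfolding U_def using False by (intro bij_betwI[where g = "\<lambda>y. y / x"]) auto
  then have "(\<Prod>y\<in>U. x * y) = \<Prod>U"
    by (rule prod.reindex_bij_betw)
  then have "x ^ card U * \<Prod>U = 1 * \<Prod>U"
    by (simp add: prod.distrib)
  moreover have "\<Prod>U \<noteq> 0"
    unfolding U_def by simp
  ultimately have "x ^ card U = 1"
    by (simp only: mult_cancel_right) simp
  moreover have "card (UNIV :: 'a set) = Suc (card U)"
    unfolding U_def using finite_UNIV_card_ge_0[where ?'a = 'a] by (simp add: card_Diff_singleton)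
  ultimately show ?thesis
    by (simp only: power_Suc) simp
qed

lemma finite_field_power_card_power:
  fixes x :: "'a::{field,finite}"
  shows "x ^ (card (UNIV :: 'a set) ^ k) = x"
  by (induction k) (simp_all add: power_mult finite_field_power_card)

lemma add_eq_add_mono_imp_eq:
  fixes a b c d :: "'k::{ordered_cancel_comm_monoid_add, linorder}"
  assumes "a \<le> c" "b \<le> d" "a + b = c + d"
  shows "a = c \<and> b = d"
proof -
  have "a = c"
  proof (rule ccontr)
    assume "a \<noteq> c"
    with assms have "a + b < c + d"
      by (intro add_less_le_mono) simp_all
    with assms show False
      by simp
  qed
  moreover have "b = d"
  proof (rule ccontr)
    assume "b \<noteq> d"
    with assms have "a + b < c + d"
      by (intro add_le_less_mono) simp_all
    with assms show False
      by simp
  qed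
  ultimately show ?thesis ..
qed

lemma lookup_mult_unique_sum:
  fixes f g :: "('k::{ordered_cancel_comm_monoid_add, linorder}) \<Rightarrow>\<^sub>0 ('a::idom)"
  assumes unique: "\<And>a b. a \<in> Poly_Mapping.keys f \<Longrightarrow> b \<in> Poly_Mapping.keys g \<Longrightarrow>
      a + b = m + m' \<Longrightarrow> a = m \<and> b = m'"
  shows "Poly_Mapping.lookup (f * g) (m + m') = Poly_Mapping.lookup f m * Poly_Mapping.lookup g m'"
proof -
  define c where "c = Poly_Mapping.single m (Poly_Mapping.lookup f m)"
  define c' where "c' = Poly_Mapping.single m' (Poly_Mapping.lookup g m')"
  have keys_rest: "Poly_Mapping.keys (f - c) \<subseteq> Poly_Mapping.keys f - {m}"
    "Poly_Mapping.keys (g - c') \<subseteq> Poly_Mapping.keys g - {m'}"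
    by (auto simp: c_def c'_def in_keys_iff lookup_minus lookup_single)
  have "f * g = c * c' + (f - c) * g + c * (g - c')"
    by (simp add: algebra_simps)
  moreover have "Poly_Mapping.lookup ((f - c) * g) (m + m') = 0"
  proof (rule ccontr)
    assume "Poly_Mapping.lookup ((f - c) * g) (m + m') \<noteq> 0"
    then have "m + m' \<in> Poly_Mapping.keys ((f - c) * g)"
      by (simp add: in_keys_iff)
    then obtain a b where "a \<in> Poly_Mapping.keys (f - c)" "b \<in> Poly_Mapping.keys g" "m + m' = a + b"
      using keys_mult by blast
    with keys_rest(1) unique[of a b] show False by auto
  qed
  moreover have "Poly_Mapping.lookup (c * (g - c')) (m + m') = 0"
  proof (rule ccontr)
    assume "Poly_Mapping.lookup (c * (g - c')) (m + m') \<noteq> 0"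
    then have "m + m' \<in> Poly_Mapping.keys (c * (g - c'))"
      by (simp add: in_keys_iff)
    then obtain a b where "a \<in> Poly_Mapping.keys c" "b \<in> Poly_Mapping.keys (g - c')" "m + m' = a + b"
      using keys_mult by blast
    moreover from \<open>a \<in> Poly_Mapping.keys c\<close> have "a = m" "m \<in> Poly_Mapping.keys f"
      by (auto simp: c_def in_keys_iff split: if_splits)
    ultimately show False
      using keys_rest(2) unique[of m b] by auto
  qed
  ultimately show ?thesis
    by (simp add: lookup_add c_def c'_def mult_single)
qed

lemma Max_keys_add_Max_keys_in_keys_mult:
  fixes f g :: "('k::{ordered_cancel_comm_monoid_add, linorder}) \<Rightarrow>\<^sub>0 ('a::idom)"
  assumes "f \<noteq> 0" "g \<noteq> 0"
  shows "Max (Poly_Mapping.keys f) + Max (Poly_Mapping.keys g) \<in> Poly_Mapping.keys (f * g)"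
proof -
  let ?M = "Max (Poly_Mapping.keys f)" and ?M' = "Max (Poly_Mapping.keys g)"
  have in_keys: "?M \<in> Poly_Mapping.keys f" "?M' \<in> Poly_Mapping.keys g"
    using assms by (simp_all add: Max_in)
  have "Poly_Mapping.lookup (f * g) (?M + ?M') = Poly_Mapping.lookup f ?M * Poly_Mapping.lookup g ?M'"
  proof (rule lookup_mult_unique_sum)
    fix a b assume "a \<in> Poly_Mapping.keys f" "b \<in> Poly_Mapping.keys g" "a + b = ?M + ?M'"
    then show "a = ?M \<and> b = ?M'"
      using add_eq_add_mono_imp_eq[of a ?M b ?M'] by simp
  qed
  with in_keys show ?thesis
    by (simp add: in_keys_iff)
qed

lemma Min_keys_add_Min_keys_in_keys_mult:
  fixes f g :: "('k::{ordered_cancel_comm_monoid_add, linorder}) \<Rightarrow>\<^sub>0 ('a::idom)"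
  assumes "f \<noteq> 0" "g \<noteq> 0"
  shows "Min (Poly_Mapping.keys f) + Min (Poly_Mapping.keys g) \<in> Poly_Mapping.keys (f * g)"
proof -
  let ?m = "Min (Poly_Mapping.keys f)" and ?m' = "Min (Poly_Mapping.keys g)"
  have in_keys: "?m \<in> Poly_Mapping.keys f" "?m' \<in> Poly_Mapping.keys g"
    using assms by (simp_all add: Min_in)
  have "Poly_Mapping.lookup (f * g) (?m + ?m') = Poly_Mapping.lookup f ?m * Poly_Mapping.lookup g ?m'"
  proof (rule lookup_mult_unique_sum)
    fix a b assume "a \<in> Poly_Mapping.keys f" "b \<in> Poly_Mapping.keys g" "a + b = ?m + ?m'"
    then show "a = ?m \<and> b = ?m'"
      using add_eq_add_mono_imp_eq[of ?m a ?m' b] by simp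
  qed
  with in_keys show ?thesis
    by (simp add: in_keys_iff)
qed

lemma unit_poly_mapping_eq_single:
  fixes f g :: "('k::{ordered_cancel_comm_monoid_add, linorder}) \<Rightarrow>\<^sub>0 ('a::idom)"
  assumes "f * g = 1"
  shows "\<exists>m c. f = Poly_Mapping.single m c"
proof -
  let ?M = "Max (Poly_Mapping.keys f)" and ?M' = "Max (Poly_Mapping.keys g)"
  let ?m = "Min (Poly_Mapping.keys f)" and ?m' = "Min (Poly_Mapping.keys g)"
  have nonzero: "f \<noteq> 0" "g \<noteq> 0"
    using assms by (metis mult_zero_left mult_zero_right zero_neq_one)+
  have "?M + ?M' = 0" "?m + ?m' = 0"
    using Max_keys_add_Max_keys_in_keys_mult[OF nonzero] Min_keys_add_Min_keys_in_keys_mult[OF nonzero]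
    by (simp_all add: assms)
  moreover have "?m \<le> ?M" "?m' \<le> ?M'"
    using nonzero by (simp_all add: Min_le Max_in)
  ultimately have "?m = ?M"
    using add_eq_add_mono_imp_eq[of ?m ?M ?m' ?M'] by simp
  have "Poly_Mapping.keys f \<subseteq> {?M}"
  proof
    fix a assume "a \<in> Poly_Mapping.keys f"
    then have "?m \<le> a" "a \<le> ?M"
      by simp_all
    with \<open>?m = ?M\<close> show "a \<in> {?M}"
      by simp
  qed
  then have "f = Poly_Mapping.single ?M (Poly_Mapping.lookup f ?M)"
    by (intro poly_mapping_eqI) (auto simp: lookup_single when_def in_keys_iff)
  then show ?thesis
    by blast
qed

lemma single_power:
  "Poly_Mapping.single (m::'k::comm_monoid_add) (c::'a::comm_semiring_1) ^ N =
    Poly_Mapping.single (\<Sum>i<N. m) (c ^ N)"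
  by (induction N) (simp_all add: mult_single add.commute)

lemma sum_lessThan_const_eq_0_imp:
  fixes m :: "'k::linordered_ab_group_add" and N :: nat
  assumes "0 < N" "(\<Sum>i<N. m) = 0"
  shows "m = 0"
proof (rule ccontr)
  assume "m \<noteq> 0"
  then consider "0 < m" | "0 < - m"
    by (cases "0 < m") (auto simp: not_less)
  then show False
  proof cases
    case 1
    then have "0 < (\<Sum>i<N. m)"
      using assms(1) by (intro sum_pos) auto
    with assms(2) show False by simp
  next
    case 2
    then have "0 < (\<Sum>i<N. - m)"
      using assms(1) by (intro sum_pos) auto
    with assms(2) show False by (simp add: sum_negf)
  qed
qed

lemma poly_mapping_eq_1_if_power_card_power_eq_1:
  fixes v :: "('k::linordered_ab_group_add) \<Rightarrow>\<^sub>0 ('a::{field,finite})"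
  assumes "v ^ (card (UNIV :: 'a set) ^ k) = 1"
  shows "v = 1"
proof -
  define N where "N = card (UNIV :: 'a set) ^ k"
  have "0 < N"
    unfolding N_def by (simp add: finite_UNIV_card_ge_0)
  then obtain N' where N': "N = Suc N'"
    using gr0_implies_Suc by blast
  have "v ^ N = 1"
    using assms by (simp only: N_def)
  then have "v * v ^ N' = 1"
    by (simp only: N' power_Suc)
  then obtain m c where v: "v = Poly_Mapping.single m c"
    using unit_poly_mapping_eq_single by blast
  have "Poly_Mapping.single (\<Sum>i<N. m) (c ^ N) = 1"
    using \<open>v ^ N = 1\<close> by (simp only: v single_power)
  moreover have "c ^ N = c"
    unfolding N_def by (rule finite_field_power_card_power)
  ultimately have "Poly_Mapping.lookup (Poly_Mapping.single (\<Sum>i<N. m) c) 0 = 1"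
    by simp
  then have "(c when (\<Sum>i<N. m) = 0) = 1"
    by (simp only: lookup_single)
  then have "c = 1" "(\<Sum>i<N. m) = 0"
    by (auto simp: when_def split: if_splits)
  moreover from \<open>0 < N\<close> this(2) have "m = 0"
    by (rule sum_lessThan_const_eq_0_imp)
  ultimately show ?thesis
    by (simp add: v)
qed

lemma frob_0:
  assumes "0 < q"
  shows "frob q n a (0 :: 'a::idom hpoly) = 0"
proof -
  have "(THE v :: 'a hpoly. v \<in> polyShat q n \<and> v ^ (q ^ k) = 0) = 0" for k
    by (rule the_equality) (use assms in \<open>simp_all add: polyShat_def\<close>)
  with assms show ?thesis
    by (simp add: frob_def)
qed

lemma frob_1:
  "frob (card (UNIV :: 'a set)) n a (1 :: 'a::{field,finite} hpoly) = 1"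
proof -
  have "(1 :: 'a hpoly) \<in> polyShat (card (UNIV :: 'a set)) n"
    by (simp add: polyShat_def flip: single_one)
  then have "(THE v :: 'a hpoly. v \<in> polyShat (card (UNIV :: 'a set)) n \<and> v ^ (card (UNIV :: 'a set) ^ k) = 1) = 1"
    for k
    by (intro the_equality) (auto intro: poly_mapping_eq_1_if_power_card_power_eq_1)
  then show ?thesis
    by (simp add: frob_def)
qed

section \<open>Partitions and skew diagrams\<close>

lemma part_antimono:
  assumes "is_partition la" "1 \<le> i" "i \<le> k"
  shows "part la k \<le> part la i"
proof (cases "k \<le> length la")
  case True
  have "sorted_wrt (\<ge>) la"
    using assms(1) by (simp add: is_partition_def sorted_wrt_iff_nth_Suc_transp)
  then have "la ! (k - 1) \<le> la ! (i - 1)"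
    using assms(2,3) True by (cases "i = k") (auto intro: sorted_wrt_nth_less)
  then show ?thesis
    using assms(2,3) True by (simp add: part_def)
qed (simp add: part_def)

lemma size_part_eq_sum:
  assumes "length la \<le> N"
  shows "size_part la = (\<Sum>i=1..N. part la i)"
proof -
  have "size_part la = (\<Sum>i<length la. part la (Suc i))"
    unfolding size_part_def sum_list_sum_nth by (auto simp: part_def atLeast0LessThan intro: sum.cong)
  also have "\<dots> = (\<Sum>i<N. part la (Suc i))"
    using assms by (intro sum.mono_neutral_left) (auto simp: part_def)
  also have "\<dots> = (\<Sum>i=1..N. part la i)"
    by (simp add: sum.atLeast1_atMost_eq)
  finally show ?thesis .
qed

lemma card_skew:
  assumes "subpart mu la"
  shows "card (skew la mu) = size_part la - size_part mu"
proof -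
  define N where "N = max (length la) (length mu)"
  have "skew la mu = (SIGMA i:{1..N}. {part mu i<..part la i})"
    by (auto simp: skew_def N_def part_def split: if_splits)
  then have "card (skew la mu) = (\<Sum>i=1..N. part la i - part mu i)"
    by (simp add: card_SigmaI)
  also have "\<dots> = (\<Sum>i=1..N. part la i) - (\<Sum>i=1..N. part mu i)"
    using assms by (intro sum_subtractf_nat) (simp add: subpart_def)
  also have "\<dots> = size_part la - size_part mu"
    using size_part_eq_sum[of la N] size_part_eq_sum[of mu N] by (simp add: N_def)
  finally show ?thesis .
qed

lemma subpart_vertical_strip_iff:
  assumes "length la \<le> N" "length mu \<le> N"
  shows "subpart mu la \<and> vertical_strip la mu \<longleftrightarrow>
    (\<forall>i\<in>{1..N}. part mu i \<le> part la i \<and> part la i \<le> Suc (part mu i))"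
proof
  assume strip: "subpart mu la \<and> vertical_strip la mu"
  have "part la i \<le> Suc (part mu i)" if "1 \<le> i" for i
  proof (rule ccontr)
    assume "\<not> ?thesis"
    then have "(i, Suc (part mu i)) \<in> skew la mu" "(i, Suc (Suc (part mu i))) \<in> skew la mu"
      using that by (auto simp: skew_def)
    with strip have "Suc (part mu i) = Suc (Suc (part mu i))"
      unfolding vertical_strip_def by blast
    then show False
      by simp
  qed
  with strip show "\<forall>i\<in>{1..N}. part mu i \<le> part la i \<and> part la i \<le> Suc (part mu i)"
    by (simp add: subpart_def)
next
  assume bounds: "\<forall>i\<in>{1..N}. part mu i \<le> part la i \<and> part la i \<le> Suc (part mu i)"
  have rows: "part mu i \<le> part la i \<and> part la i \<le> Suc (part mu i)" for i
    using bounds assms by (cases "i \<in> {1..N}") (auto simp: part_def)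
  have row_end: "j = Suc (part mu i)" if "(i, j) \<in> skew la mu" for i j
    using that rows[of i] by (auto simp: skew_def)
  have "vertical_strip la mu"
    unfolding vertical_strip_def using row_end by metis
  with rows show "subpart mu la \<and> vertical_strip la mu"
    by (simp add: subpart_def)
qed

lemma skew_eq_row_ends:
  assumes "length la \<le> N"
    and "\<forall>i\<in>{1..N}. part mu i \<le> part la i \<and> part la i \<le> Suc (part mu i)"
  shows "skew la mu = (\<lambda>i. (i, part la i)) ` {i\<in>{1..N}. part la i = Suc (part mu i)}"
proof -
  have "i \<le> N" if "0 < part la i" for i
    using that assms(1) by (auto simp: part_def split: if_splits)
  with assms(2) show ?thesis
    by (force simp: skew_def)
qed

lemma signed_prod_skew_vertical_strip:
  fixes g :: "nat \<times> nat \<Rightarrow> 'a::comm_ring_1"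
  assumes "length la \<le> N" "length mu \<le> N"
    and rows: "\<forall>i\<in>{1..N}. part mu i \<le> part la i \<and> part la i \<le> Suc (part mu i)"
  shows "(-1) ^ (size_part la - size_part mu) * (\<Prod>s\<in>skew la mu. g s) =
    (\<Prod>i=1..N. if part la i = Suc (part mu i) then - g (i, part la i) else 1)"
proof -
  let ?ends = "{i\<in>{1..N}. part la i = Suc (part mu i)}"
  have "subpart mu la"
    using subpart_vertical_strip_iff[OF assms(1,2)] rows by blast
  then have "(-1) ^ (size_part la - size_part mu) * (\<Prod>s\<in>skew la mu. g s) = (\<Prod>s\<in>skew la mu. - g s)"
    by (simp add: prod_uminus card_skew)
  also have "\<dots> = (\<Prod>i\<in>?ends. - g (i, part la i))"
    unfolding skew_eq_row_ends[OF assms(1) rows]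
    by (rule prod.reindex[unfolded comp_def]) (simp add: inj_on_def)
  also have "\<dots> = (\<Prod>i=1..N. if part la i = Suc (part mu i) then - g (i, part la i) else 1)"
    by (rule prod.inter_filter) simp
  finally show ?thesis .
qed

section \<open>Determinants with a vanishing pattern\<close>

lemma permutes_has_inversion:
  assumes p: "p permutes {0..<(n::nat)}" and "p \<noteq> id"
  shows "\<exists>i k. i < k \<and> k < n \<and> p k < p i"
proof -
  obtain k where k: "k < n" "p k < k"
    using permutes_natset_ge[OF p] assms(2) by (meson atLeastLessThan_iff not_le zero_le)
  show ?thesis
  proof (rule ccontr)
    assume "\<not> ?thesis"
    then have "p j < p k" if "j < k" for j
      using that k permutes_inj[OF p] by (metis inj_eq less_trans nat_neq_iff)
    then have "p ` {0..<k} \<subseteq> {0..<p k}"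
      by auto
    moreover have "inj_on p {0..<k}"
      using permutes_inj[OF p] by (auto intro: inj_on_subset)
    ultimately have "k \<le> p k"
      using card_inj_on_le[of p "{0..<k}" "{0..<p k}"] by simp
    with k show False
      by simp
  qed
qed

lemma det_eq_prod_diag_if_inversions_vanish:
  assumes A: "A \<in> carrier_mat n n"
    and vanish: "\<And>i k j j'. i < k \<Longrightarrow> k < n \<Longrightarrow> j < j' \<Longrightarrow> j' < n \<Longrightarrow> A $$ (i, j') = 0 \<or> A $$ (k, j) = 0"
  shows "det A = (\<Prod>i=0..<n. A $$ (i, i))"
proof -
  have "(\<Prod>i=0..<n. A $$ (i, p i)) = 0" if p: "p permutes {0..<n}" "p \<noteq> id" for p
  proof -
    obtain i k where ik: "i < k" "k < n" "p k < p i"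
      using permutes_has_inversion[OF p] by blast
    moreover have "p i < n"
      using ik p(1) by (simp add: permutes_nat_less)
    ultimately have "A $$ (i, p i) = 0 \<or> A $$ (k, p k) = 0"
      by (intro vanish)
    then obtain l where "l < n" "A $$ (l, p l) = 0"
      using ik order.strict_trans by blast
    then show ?thesis
      by (intro prod_zero) (auto intro: bexI[of _ l])
  qed
  then have "det A = (\<Sum>p\<in>{id}. signof p * (\<Prod>i=0..<n. A $$ (i, p i)))"
    unfolding det_def'[OF A]
    by (intro sum.mono_neutral_right) (auto simp: finite_permutations permutes_id)
  then show ?thesis
    by simp
qed

section \<open>The determinant for a one-dimensional space\<close>

definition Tskew_entry ::
    "nat \<Rightarrow> nat \<Rightarrow> 'a::comm_ring_1 hpoly \<Rightarrow> nat list \<Rightarrow> nat list \<Rightarrow> nat \<Rightarrow> nat \<Rightarrow> 'a hpoly" where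
  "Tskew_entry q n w la mu i j =
    (let r = int (part la i) - int (part mu j) - int i + int j
     in (if even r then 1 else -1) * frob q n (int (part la i) - int i) (E1dim q w r))"

lemma Tskew_eq_det:
  "Tskew q n w la mu = det (mat (max (length la) (length mu)) (max (length la) (length mu))
    (\<lambda>(i, j). Tskew_entry q n w la mu (Suc i) (Suc j)))"
  by (simp add: Tskew_def Tskew_entry_def Let_def)

lemma Tskew_entry_eq_0:
  fixes w :: "'a::idom hpoly"
  assumes "0 < q" and "int (part la i) - int (part mu j) - int i + int j \<notin> {0, 1}"
  shows "Tskew_entry q n w la mu i j = 0"
  using assms by (simp add: Tskew_entry_def E1dim_def frob_0)

lemma Tskew_entry_inversion_eq_0:
  fixes w :: "'a::idom hpoly"
  assumes "is_partition la" "is_partition mu" "0 < q" "1 \<le> i" "i < k" "1 \<le> j" "j < j'"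
  shows "Tskew_entry q n w la mu i j' = 0 \<or> Tskew_entry q n w la mu k j = 0"
proof -
  have "part la k \<le> part la i" "part mu j' \<le> part mu j"
    using assms by (simp_all add: part_antimono)
  then have "int (part la i) - int (part mu j') - int i + int j' \<notin> {0, 1} \<or>
      int (part la k) - int (part mu j) - int k + int j \<notin> {0, 1}"
    using assms(5,7) by auto
  with assms(3) show ?thesis
    using Tskew_entry_eq_0 by blast
qed

lemma Tskew_eq_prod_diag:
  fixes w :: "'a::idom hpoly"
  assumes "is_partition la" "is_partition mu" "0 < q"
  shows "Tskew q n w la mu = (\<Prod>i=1..max (length la) (length mu). Tskew_entry q n w la mu i i)"
proof -
  let ?N = "max (length la) (length mu)"
  have "Tskew q n w la mu = (\<Prod>i=0..<?N. Tskew_entry q n w la mu (Suc i) (Suc i))"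
    unfolding Tskew_eq_det
    by (subst det_eq_prod_diag_if_inversions_vanish[where n = ?N])
      (simp_all add: Tskew_entry_inversion_eq_0[OF assms])
  then show ?thesis
    by (simp add: prod.atLeast1_atMost_eq atLeast0LessThan)
qed

lemma Tskew_entry_diag:
  fixes w :: "'a::{field,finite} hpoly"
  shows "Tskew_entry (card (UNIV :: 'a set)) n w la mu i i =
    (if part la i = part mu i then 1
     else if part la i = Suc (part mu i)
     then - frob (card (UNIV :: 'a set)) n (int (part la i) - int i) (E1dim (card (UNIV :: 'a set)) w 1)
     else 0)"
  by (auto simp: Tskew_entry_def E1dim_def frob_0 frob_1 finite_UNIV_card_ge_0)

theorem mainTheorem4:
  fixes w :: "('a::{field,finite}) hpoly" and n :: nat and la mu :: "nat list"
  assumes "w \<in> polyS n" and "w \<noteq> 0"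
    and "is_partition la" and "is_partition mu"
  shows "Tskew (card (UNIV :: 'a set)) n w la mu =
    (if subpart mu la \<and> vertical_strip la mu
     then (-1) ^ (size_part la - size_part mu) *
          (\<Prod>s\<in>skew la mu. frob (card (UNIV :: 'a set)) n (content s) (E1dim (card (UNIV :: 'a set)) w 1))
     else 0)"
proof -
  let ?q = "card (UNIV :: 'a set)"
  define N where "N = max (length la) (length mu)"
  define X where "X s = frob ?q n (content s) (E1dim ?q w 1)" for s
  have lengths: "length la \<le> N" "length mu \<le> N"
    by (simp_all add: N_def)
  have T: "Tskew ?q n w la mu = (\<Prod>i=1..N. Tskew_entry ?q n w la mu i i)"
    unfolding N_def using assms(3,4) by (rule Tskew_eq_prod_diag) (simp add: finite_UNIV_card_ge_0)
  show ?thesis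
  proof (cases "subpart mu la \<and> vertical_strip la mu")
    case True
    then have rows: "\<forall>i\<in>{1..N}. part mu i \<le> part la i \<and> part la i \<le> Suc (part mu i)"
      using subpart_vertical_strip_iff[OF lengths] by blast
    then have "(\<Prod>i=1..N. Tskew_entry ?q n w la mu i i) =
        (\<Prod>i=1..N. if part la i = Suc (part mu i) then - X (i, part la i) else 1)"
      by (intro prod.cong refl) (use rows in \<open>fastforce simp: Tskew_entry_diag X_def content_def\<close>)
    also have "\<dots> = (-1) ^ (size_part la - size_part mu) * (\<Prod>s\<in>skew la mu. X s)"
      by (rule signed_prod_skew_vertical_strip[OF lengths rows, symmetric])
    finally show ?thesis
      using T True by (simp add: X_def)
  next
    case False
    then obtain i where "i \<in> {1..N}" "\<not> (part mu i \<le> part la i \<and> part la i \<le> Suc (part mu i))"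
      using subpart_vertical_strip_iff[OF lengths] by blast
    then have "Tskew_entry ?q n w la mu i i = 0"
      by (auto simp: Tskew_entry_diag)
    with \<open>i \<in> {1..N}\<close> have "(\<Prod>i=1..N. Tskew_entry ?q n w la mu i i) = 0"
      by (intro prod_zero) auto
    with T show ?thesis
      by (simp only: if_not_P[OF False])
  qed
qed

end
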